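(* The following are equivalent: (1) for all $i,j$, $w_i/w_j\in\mathbb{Q}\Rightarrow w_i=w_j$; (2) every periodic orbit of $H_w$ is NDR in its energy surface.
   Context: $H_w(x,\xi):=\frac12(|\xi|^2+\sum_{j=1}^nw_j^2x_j^2)$ on $\mathbb{R}^{2n}$ with $w\in(\mathbb{R}_+^* )^n$, flow $\Phi_t$ of $\dot z=J\nabla H_w(z)$, $J=\begin{pmatrix}0&I_n\\-I_n&0\end{pmatrix}$, $M_z(t)=\partial_z\Phi_t(z)$, $E_1(T,z):=\sum_{k\ge1}\ker(M_z(T)-I)^k$. $G_{max}:=\{g\in Sp(n):H_w(gz)=H_w(z)\ \forall z\}$ (the group of linear symplectic symmetries; here it is a compact Lie group), with Lie algebra $\mathcal{G}$, and $\mathcal{G}z:=\{Az:A\in\mathcal{G}\}$. A periodic orbit is a pair $(T,z)$, $T\ne0$, $z\ne0$, $\Phi_T(z)=z$; it is NDR in its energy surface if $\dim E_1(T,z)=\dim(\mathbb{R}J\nabla H_w(z)+\mathcal{G}z)+1$. *)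

theory Defs
  imports "HOL-Analysis.Analysis"
begin

type_synonym 'n phase = "(real^'n) \<times> (real^'n)"

definition Jmap :: "'n::finite phase \<Rightarrow> 'n phase" where
  "Jmap z = (snd z, - fst z)"

definition Hw :: "real^'n::finite \<Rightarrow> 'n phase \<Rightarrow> real" where
  "Hw w z = (1/2) * ((norm (snd z))\<^sup>2 + (\<Sum>j\<in>UNIV. (w$j)\<^sup>2 * (fst z $ j)\<^sup>2))"

definition grad :: "('a::real_inner \<Rightarrow> real) \<Rightarrow> 'a \<Rightarrow> 'a" where
  "grad f z = (THE g. (f has_derivative (\<lambda>h. g \<bullet> h)) (at z))"

definition hamvf :: "real^'n::finite \<Rightarrow> 'n phase \<Rightarrow> 'n phase" where
  "hamvf w z = Jmap (grad (Hw w) z)"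

definition flow :: "real^'n::finite \<Rightarrow> real \<Rightarrow> 'n phase \<Rightarrow> 'n phase" where
  "flow w = (THE Phi. \<forall>z. Phi 0 z = z \<and>
      (\<forall>t. ((\<lambda>s. Phi s z) has_vector_derivative hamvf w (Phi t z)) (at t)))"

definition Mz :: "real^'n::finite \<Rightarrow> 'n phase \<Rightarrow> real \<Rightarrow> 'n phase \<Rightarrow> 'n phase" where
  "Mz w z t = (THE L. (flow w t has_derivative L) (at z))"

definition E1 :: "real^'n::finite \<Rightarrow> real \<Rightarrow> 'n phase \<Rightarrow> 'n phase set" where
  "E1 w T z = span (\<Union>k\<in>{1..}. {v. ((\<lambda>u. Mz w z T u - u) ^^ k) v = 0})"

definition omega :: "'n::finite phase \<Rightarrow> 'n phase \<Rightarrow> real" where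
  "omega u v = u \<bullet> Jmap v"

definition Sp :: "('n::finite phase \<Rightarrow> 'n phase) set" where
  "Sp = {g. linear g \<and> (\<forall>u v. omega (g u) (g v) = omega u v)}"

definition Gmax :: "real^'n::finite \<Rightarrow> ('n phase \<Rightarrow> 'n phase) set" where
  "Gmax w = {g \<in> Sp. \<forall>z. Hw w (g z) = Hw w z}"

definition lin_exp :: "('a::real_normed_vector \<Rightarrow> 'a) \<Rightarrow> 'a \<Rightarrow> 'a" where
  "lin_exp A v = (\<Sum>k. (1 / fact k) *\<^sub>R ((A ^^ k) v))"

definition lie_alg :: "('a::real_normed_vector \<Rightarrow> 'a) set \<Rightarrow> ('a \<Rightarrow> 'a) set" where
  "lie_alg G = {A. linear A \<and> (\<forall>t. lin_exp (\<lambda>u. t *\<^sub>R A u) \<in> G)}"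

definition periodic_orbit :: "real^'n::finite \<Rightarrow> real \<Rightarrow> 'n phase \<Rightarrow> bool" where
  "periodic_orbit w T z \<longleftrightarrow> T \<noteq> 0 \<and> z \<noteq> 0 \<and> flow w T z = z"

definition NDR :: "real^'n::finite \<Rightarrow> real \<Rightarrow> 'n phase \<Rightarrow> bool" where
  "NDR w T z \<longleftrightarrow>
     dim (E1 w T z) =
     dim {a *\<^sub>R hamvf w z + A z | a A. A \<in> lie_alg (Gmax w)} + 1"

end

theory Submission
  imports Defs
begin

(* The flow of H_w is explicit: the j-th oscillator (x_j, xi_j) rotates with frequency w_j.
   This rotation is semisimple, so E_1(T,z) is the span of the modes j with w_j T in 2 pi Z.
   Let c be the frequency of a mode excited by the periodic orbit z, and V the span of all modes
   of frequency c. Symmetries of H_w commute with J grad H_w, hence preserve V and its energy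
   ellipsoid; conversely, the unitary rotations of V (for the complex structure J_w with
   J grad H_w = c J_w on V) are symmetries. Hence R J grad H_w(z) + G z is the tangent space at z
   of the energy ellipsoid in V, of dimension dim V - 1, and the orbit is NDR iff E_1(T,z) = V.
   Without resonances, w_j T in 2 pi Z forces w_j = c, so this always holds; a resonance
   w_i / w_j = a / b with w_i <> w_j gives the orbit x = e_i of period 2 pi b / w_j, whose E_1
   contains mode j besides V. *)

section \<open>The Hamiltonian and its flow\<close>

definition Hform :: "real^'n::finite \<Rightarrow> 'n phase \<Rightarrow> 'n phase \<Rightarrow> real" where
  "Hform w u v = (\<Sum>j\<in>UNIV. (w$j)\<^sup>2 * (fst u $ j * fst v $ j) + snd u $ j * snd v $ j)"

lemma Hw_eq_Hform: "Hw w z = Hform w z z / 2"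
  unfolding Hw_def Hform_def power2_norm_eq_inner inner_vec_def
  by (simp add: sum.distrib power2_eq_square algebra_simps)

lemma Hform_sym: "Hform w u v = Hform w v u"
  unfolding Hform_def by (simp add: algebra_simps)

lemma Hform_add_right: "Hform w u (v + v') = Hform w u v + Hform w u v'"
  unfolding Hform_def by (simp add: algebra_simps sum.distrib)
lemma Hform_add_left: "Hform w (v + v') u = Hform w v u + Hform w v' u"
  unfolding Hform_def by (simp add: algebra_simps sum.distrib)
lemma Hform_scaleR_right: "Hform w u (c *\<^sub>R v) = c * Hform w u v"
  unfolding Hform_def by (simp add: algebra_simps sum_distrib_left)
lemma Hform_scaleR_left: "Hform w (c *\<^sub>R v) u = c * Hform w v u"
  unfolding Hform_def by (simp add: algebra_simps sum_distrib_left)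
lemma Hform_diff_right: "Hform w u (v - v') = Hform w u v - Hform w u v'"
  unfolding Hform_def by (simp add: algebra_simps sum_subtractf)
lemma Hform_diff_left: "Hform w (v - v') u = Hform w v u - Hform w v' u"
  unfolding Hform_def by (simp add: algebra_simps sum_subtractf)
lemma Hform_minus_right: "Hform w u (- v) = - Hform w u v"
  using Hform_scaleR_right[of w u "-1" v] by simp
lemma Hform_minus_left: "Hform w (- v) u = - Hform w v u"
  using Hform_scaleR_left[of w "-1" v u] by simp
lemma Hform_zero_right [simp]: "Hform w u 0 = 0"
  unfolding Hform_def by simp
lemma Hform_zero_left [simp]: "Hform w 0 u = 0"
  unfolding Hform_def by simp

lemmas Hform_bilinear_simps = Hform_add_right Hform_add_left Hform_scaleR_right Hform_scaleR_left
  Hform_diff_right Hform_diff_left Hform_minus_right Hform_minus_left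

lemma bilinear_Hform: "bilinear (Hform w)"
  unfolding bilinear_def by (simp add: linear_iff Hform_bilinear_simps)

lemma bounded_bilinear_Hform: "bounded_bilinear (Hform w)"
  using bilinear_Hform bilinear_conv_bounded_bilinear by blast

lemma Hform_nonneg: "Hform w u u \<ge> 0"
  unfolding Hform_def by (intro sum_nonneg) (auto intro!: add_nonneg_nonneg)

lemma Hform_pos:
  assumes "\<forall>j. w $ j > 0" "u \<noteq> 0"
  shows "Hform w u u > 0"
proof (rule ccontr)
  assume "\<not> Hform w u u > 0"
  then have "Hform w u u = 0" using Hform_nonneg[of w u] by linarith
  then have "(w$j)\<^sup>2 * (fst u $ j * fst u $ j) + snd u $ j * snd u $ j = 0" for j
    unfolding Hform_def by (subst (asm) sum_nonneg_eq_0_iff) auto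
  moreover have "w $ j \<noteq> 0" for j using assms(1) by (metis less_irrefl)
  ultimately have "fst u $ j = 0 \<and> snd u $ j = 0" for j
    by (simp add: add_nonneg_eq_0_iff)
  then have "u = 0" by (simp add: prod_eq_iff vec_eq_iff)
  then show False using assms by simp
qed

lemma Hw_has_derivative:
  "(Hw w has_derivative (\<lambda>h. ((\<chi> j. (w$j)\<^sup>2 * fst z $ j), snd z) \<bullet> h)) (at z)"
proof -
  have "((\<lambda>x. Hform w x x) has_derivative (\<lambda>h. Hform w z h + Hform w h z)) (at z)"
    using bounded_bilinear.FDERIV[OF bounded_bilinear_Hform has_derivative_ident has_derivative_ident] .
  then have "(Hw w has_derivative (\<lambda>h. (Hform w z h + Hform w h z) / 2)) (at z)"
    unfolding Hw_eq_Hform[abs_def] by (auto intro!: derivative_eq_intros)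
  moreover have "(Hform w z h + Hform w h z) / 2 = ((\<chi> j. (w$j)\<^sup>2 * fst z $ j), snd z) \<bullet> h" for h
    unfolding Hform_sym[of w h z] Hform_def inner_prod_def inner_vec_def
    by (simp add: sum.distrib algebra_simps)
  ultimately show ?thesis by simp
qed

lemma grad_eqI:
  fixes f :: "'a::real_inner \<Rightarrow> real"
  assumes "(f has_derivative (\<lambda>h. g \<bullet> h)) (at z)"
  shows "grad f z = g"
  unfolding grad_def
proof (rule the_equality)
  fix g' assume "(f has_derivative (\<lambda>h. g' \<bullet> h)) (at z)"
  then have "(\<lambda>h. g' \<bullet> h) = (\<lambda>h. g \<bullet> h)" using assms has_derivative_unique by blast
  then have "(g' - g) \<bullet> (g' - g) = 0" by (metis inner_diff_left diff_self)
  then show "g' = g" by simp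
qed (use assms in simp)

lemma hamvf_eq: "hamvf w z = (snd z, \<chi> j. - ((w$j)\<^sup>2 * fst z $ j))"
  unfolding hamvf_def grad_eqI[OF Hw_has_derivative] Jmap_def by (simp add: vec_eq_iff)

lemma linear_hamvf: "linear (hamvf w)"
  by (rule linearI) (simp_all add: hamvf_eq prod_eq_iff vec_eq_iff algebra_simps)

lemma Hform_hamvf_self: "Hform w u (hamvf w u) = 0"
  unfolding Hform_def hamvf_eq by (simp add: algebra_simps)

lemma Hform_conserved:
  assumes "\<And>t. (D has_vector_derivative hamvf w (D t)) (at t)"
  shows "Hform w (D s) (D s) = Hform w (D 0) (D 0)"
proof -
  have "((\<lambda>t. Hform w (D t) (D t)) has_real_derivative 0) (at t)" for t
  proof -
    have "((\<lambda>t. Hform w (D t) (D t)) has_vector_derivative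
        Hform w (D t) (hamvf w (D t)) + Hform w (hamvf w (D t)) (D t)) (at t)"
      by (rule bounded_bilinear.has_vector_derivative[OF bounded_bilinear_Hform assms assms])
    then show ?thesis
      by (simp add: has_real_derivative_iff_has_vector_derivative Hform_hamvf_self Hform_sym[of w "hamvf w _"])
  qed
  then show ?thesis using DERIV_isconst_all by blast
qed

definition osc_flow :: "real^'n::finite \<Rightarrow> real \<Rightarrow> 'n phase \<Rightarrow> 'n phase" where
  "osc_flow w t z = ((\<chi> j. fst z $ j * cos (w$j * t) + snd z $ j * sin (w$j * t) / w$j),
                     (\<chi> j. - (w$j * fst z $ j * sin (w$j * t)) + snd z $ j * cos (w$j * t)))"

lemma osc_flow_0: "osc_flow w 0 z = z"
  by (simp add: osc_flow_def prod_eq_iff vec_eq_iff)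

lemma linear_osc_flow: "linear (osc_flow w t)"
  by (rule linearI) (simp_all add: osc_flow_def prod_eq_iff vec_eq_iff algebra_simps add_divide_distrib)

lemma has_vector_derivative_vec_lambda:
  assumes "\<And>i. ((\<lambda>t. f t i) has_real_derivative f' i) (at t within S)"
  shows "((\<lambda>t. \<chi> i. f t i) has_vector_derivative (\<chi> i. f' i)) (at t within S)"
proof -
  have "((\<lambda>t. (\<chi> i. f t i) \<bullet> b) has_derivative (\<lambda>h. (h *\<^sub>R (\<chi> i. f' i)) \<bullet> b)) (at t within S)"
    if "b \<in> Basis" for b
  proof -
    from that obtain i where b: "b = axis i 1" by (auto simp: Basis_vec_def)
    show ?thesis
      using assms[of i] by (simp add: b inner_axis has_field_derivative_def mult_commute_abs)
  qed
  then show ?thesis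
    unfolding has_vector_derivative_def using has_derivative_componentwise_within by blast
qed

lemma osc_flow_has_vector_derivative:
  assumes "\<forall>j. w $ j > 0"
  shows "((\<lambda>s. osc_flow w s z) has_vector_derivative hamvf w (osc_flow w t z)) (at t)"
proof -
  have "w $ j \<noteq> 0" for j using assms by (metis less_irrefl)
  then show ?thesis
    unfolding osc_flow_def hamvf_eq
    by (auto intro!: has_vector_derivative_Pair has_vector_derivative_vec_lambda derivative_eq_intros
        simp: field_simps power2_eq_square)
qed

lemma flow_eq_osc_flow:
  assumes w: "\<forall>j. w $ j > 0"
  shows "flow w = osc_flow w"
  unfolding flow_def
proof (rule the_equality)
  show "\<forall>z. osc_flow w 0 z = z \<and>
      (\<forall>t. ((\<lambda>s. osc_flow w s z) has_vector_derivative hamvf w (osc_flow w t z)) (at t))"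
    using osc_flow_0 osc_flow_has_vector_derivative[OF w] by blast
next
  fix Psi
  assume Psi: "\<forall>z. Psi 0 z = z \<and> (\<forall>t. ((\<lambda>s. Psi s z) has_vector_derivative hamvf w (Psi t z)) (at t))"
  show "Psi = osc_flow w"
  proof (intro ext)
    fix s z
    define D where "D t = Psi t z - osc_flow w t z" for t
    have "(D has_vector_derivative hamvf w (D t)) (at t)" for t
      unfolding D_def linear_diff[OF linear_hamvf]
      by (intro has_vector_derivative_diff) (use Psi osc_flow_has_vector_derivative[OF w] in blast)+
    then have "Hform w (D s) (D s) = Hform w (D 0) (D 0)" by (rule Hform_conserved)
    also have "D 0 = 0" using spec[OF Psi, of z] by (simp add: D_def osc_flow_0)
    finally have "D s = 0" using Hform_pos[OF w, of "D s"] by fastforce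
    then show "Psi s z = osc_flow w s z" by (simp add: D_def)
  qed
qed

lemma Mz_eq_osc_flow:
  assumes "\<forall>j. w $ j > 0"
  shows "Mz w z t = osc_flow w t"
  unfolding Mz_def flow_eq_osc_flow[OF assms]
  using linear_imp_has_derivative[OF linear_osc_flow] has_derivative_unique by blast

section \<open>The generalized eigenspace of the linearized flow\<close>

definition mode_space :: "('n::finite \<Rightarrow> bool) \<Rightarrow> 'n phase set" where
  "mode_space P = {z. \<forall>j. \<not> P j \<longrightarrow> fst z $ j = 0 \<and> snd z $ j = 0}"

lemma subspace_mode_space: "subspace (mode_space P)"
  unfolding subspace_def mode_space_def by auto

lemma mode_space_mono: "(\<And>j. P j \<Longrightarrow> Q j) \<Longrightarrow> mode_space P \<subseteq> mode_space Q"
  unfolding mode_space_def by blast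

abbreviation freq_space :: "real^'n::finite \<Rightarrow> 'n \<Rightarrow> 'n phase set" where
  "freq_space w k \<equiv> mode_space (\<lambda>j. w $ j = w $ k)"

lemma osc_flow_fixed_component:
  assumes "w $ j > 0" and "cos (w$j * T) \<noteq> 1"
    and "fst (osc_flow w T v) $ j = fst v $ j" and "snd (osc_flow w T v) $ j = snd v $ j"
  shows "fst v $ j = 0 \<and> snd v $ j = 0"
proof -
  define C S x y where "C = cos (w$j * T)" and "S = sin (w$j * T)"
    and "x = fst v $ j" and "y = snd v $ j"
  have E1: "w$j * (C - 1) * x + S * y = 0"
    using assms(1,3) by (simp add: osc_flow_def C_def S_def x_def y_def field_simps)
  have E2: "- (w$j * x * S) + (C - 1) * y = 0"
    using assms(4) by (simp add: osc_flow_def C_def S_def x_def y_def algebra_simps)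
  have pos: "(C - 1)\<^sup>2 + S\<^sup>2 > 0"
    using assms(2) by (simp add: C_def add_pos_nonneg)
  have "w$j * x * ((C - 1)\<^sup>2 + S\<^sup>2) =
      (C - 1) * (w$j * (C - 1) * x + S * y) - S * (- (w$j * x * S) + (C - 1) * y)"
    by (simp add: algebra_simps power2_eq_square)
  then have "w$j * x * ((C - 1)\<^sup>2 + S\<^sup>2) = 0" unfolding E1 E2 by simp
  then have "x = 0" using pos assms(1) by auto
  then show ?thesis using E2 assms(2) by (simp add: C_def x_def y_def)
qed

lemma osc_flow_fixed_iff:
  assumes "\<forall>j. w $ j > 0"
  shows "osc_flow w T v = v \<longleftrightarrow> v \<in> mode_space (\<lambda>j. cos (w$j * T) = 1)"
proof
  assume "osc_flow w T v = v"
  then have "fst v $ j = 0 \<and> snd v $ j = 0" if "cos (w$j * T) \<noteq> 1" for j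
    using osc_flow_fixed_component[of w j T v] assms that by simp
  then show "v \<in> mode_space (\<lambda>j. cos (w$j * T) = 1)" by (simp add: mode_space_def)
next
  assume v: "v \<in> mode_space (\<lambda>j. cos (w$j * T) = 1)"
  have "fst (osc_flow w T v) $ j = fst v $ j \<and> snd (osc_flow w T v) $ j = snd v $ j" for j
  proof (cases "cos (w$j * T) = 1")
    case True
    then have "sin (w$j * T) = 0" using sin_cos_squared_add[of "w$j * T"] by simp
    then show ?thesis using True by (simp add: osc_flow_def)
  next
    case False
    then show ?thesis using v by (simp add: osc_flow_def mode_space_def)
  qed
  then show "osc_flow w T v = v" by (simp add: prod_eq_iff vec_eq_iff)
qed

lemma E1_eq_mode_space:
  assumes w: "\<forall>j. w $ j > 0"
  shows "E1 w T z = mode_space (\<lambda>j. cos (w$j * T) = 1)"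
proof -
  define N where "N u = osc_flow w T u - u" for u
  define S where "S = mode_space (\<lambda>j. cos (w$j * T) = 1)"
  have kernel_N: "(N ^^ k) v = 0 \<Longrightarrow> v \<in> S" for k v
  proof (induction k arbitrary: v)
    case (Suc k)
    then have "N v \<in> S" by (simp add: funpow_Suc_right del: funpow.simps)
    show ?case unfolding S_def mode_space_def
    proof (intro CollectI allI impI)
      fix j assume j: "cos (w$j * T) \<noteq> 1"
      with \<open>N v \<in> S\<close> have "fst (osc_flow w T v) $ j = fst v $ j" "snd (osc_flow w T v) $ j = snd v $ j"
        by (auto simp: S_def N_def mode_space_def)
      then show "fst v $ j = 0 \<and> snd v $ j = 0" using osc_flow_fixed_component w j by blast
    qed
  qed (simp add: S_def mode_space_def)
  have "E1 w T z = span (\<Union>k\<in>{1..}. {v. (N ^^ k) v = 0})"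
    unfolding E1_def Mz_eq_osc_flow[OF w] N_def ..
  also have "\<dots> = S"
  proof
    show "span (\<Union>k\<in>{1..}. {v. (N ^^ k) v = 0}) \<subseteq> S"
      using kernel_N by (intro span_minimal) (auto simp: S_def subspace_mode_space)
    have "S \<subseteq> {v. (N ^^ 1) v = 0}"
      using osc_flow_fixed_iff[OF w] by (auto simp: S_def N_def)
    then have "S \<subseteq> (\<Union>k\<in>{1..}. {v. (N ^^ k) v = 0})" by blast
    then show "S \<subseteq> span (\<Union>k\<in>{1..}. {v. (N ^^ k) v = 0})"
      using span_superset by blast
  qed
  finally show ?thesis unfolding S_def .
qed

section \<open>Linear symplectic symmetries\<close>

lemma omega_eq: "omega u v = fst u \<bullet> snd v - snd u \<bullet> fst v"
  by (simp add: omega_def Jmap_def inner_prod_def)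

lemma omega_add_left: "omega (a + b) y = omega a y + omega b y"
  by (simp add: omega_eq inner_add_left)
lemma omega_add_right: "omega y (a + b) = omega y a + omega y b"
  by (simp add: omega_eq inner_add_right)
lemma omega_diff_left: "omega (a - b) y = omega a y - omega b y"
  by (simp add: omega_eq inner_diff_left)
lemma omega_diff_right: "omega y (a - b) = omega y a - omega y b"
  by (simp add: omega_eq inner_diff_right)
lemma omega_scaleR_left: "omega (r *\<^sub>R a) y = r * omega a y"
  by (simp add: omega_eq right_diff_distrib)
lemma omega_scaleR_right: "omega y (r *\<^sub>R a) = r * omega y a"
  by (simp add: omega_eq right_diff_distrib)
lemma omega_antisym: "omega a b = - omega b a"
  by (simp add: omega_eq inner_commute)

lemma bilinear_omega: "bilinear omega"
  unfolding bilinear_def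
  by (simp add: linear_iff omega_add_left omega_add_right omega_scaleR_left omega_scaleR_right)

lemma Hform_eq_omega_hamvf: "Hform w u v = - omega u (hamvf w v)"
  unfolding omega_eq hamvf_eq Hform_def inner_vec_def
  by (simp add: sum.distrib sum_negf algebra_simps)

lemma Sp_linear: "g \<in> Sp \<Longrightarrow> linear g"
  unfolding Sp_def by blast
lemma Sp_omega: "g \<in> Sp \<Longrightarrow> omega (g u) (g v) = omega u v"
  unfolding Sp_def by blast
lemma Gmax_Sp: "g \<in> Gmax w \<Longrightarrow> g \<in> Sp"
  unfolding Gmax_def by blast
lemma Gmax_Hw: "g \<in> Gmax w \<Longrightarrow> Hw w (g z) = Hw w z"
  unfolding Gmax_def by blast

lemma Sp_inj:
  assumes "g \<in> Sp"
  shows "inj g"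
  unfolding linear_inj_iff_eq_0[OF Sp_linear[OF assms]]
proof (intro allI impI)
  fix u assume "g u = 0"
  have "u \<bullet> u = omega u (- snd u, fst u)" by (simp add: omega_def Jmap_def)
  also have "\<dots> = omega (g u) (g (- snd u, fst u))" using Sp_omega[OF assms] by simp
  also have "\<dots> = 0" by (simp add: \<open>g u = 0\<close> omega_def)
  finally show "u = 0" by simp
qed

lemma Gmax_preserves_Hform:
  assumes g: "g \<in> Gmax w"
  shows "Hform w (g u) (g v) = Hform w u v"
proof -
  have lin: "linear g" using Sp_linear[OF Gmax_Sp[OF g]] .
  have Q: "Hform w (g z) (g z) = Hform w z z" for z using Gmax_Hw[OF g, of z] by (simp add: Hw_eq_Hform)
  have "Hform w (g (u + v)) (g (u + v)) = Hform w (u + v) (u + v)" by (rule Q)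
  then show ?thesis
    using Q[of u] Q[of v]
    by (simp add: linear_add[OF lin] Hform_add_left Hform_add_right Hform_sym[of w v u]
        Hform_sym[of w "g v" "g u"])
qed

lemma Gmax_commutes_hamvf:
  assumes g: "g \<in> Gmax w"
  shows "hamvf w (g v) = g (hamvf w v)"
proof -
  have Sp: "g \<in> Sp" using Gmax_Sp[OF g] .
  define d where "d = hamvf w (g v) - g (hamvf w v)"
  have "omega (g u) d = 0" for u
  proof -
    have "omega (g u) (hamvf w (g v)) = omega u (hamvf w v)"
      using Gmax_preserves_Hform[OF g] by (simp add: Hform_eq_omega_hamvf)
    also have "\<dots> = omega (g u) (g (hamvf w v))" using Sp_omega[OF Sp] by simp
    finally show ?thesis by (simp add: d_def omega_diff_right)
  qed
  moreover obtain u where "g u = Jmap d"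
    using linear_inj_imp_surj[OF Sp_linear[OF Sp] Sp_inj[OF Sp]] by (metis surjD)
  ultimately have "Jmap d \<bullet> Jmap d = 0" by (metis omega_def)
  then have "Jmap d = 0" by simp
  then have "d = 0" by (simp add: Jmap_def prod_eq_iff)
  then show ?thesis by (simp add: d_def)
qed

lemma Gmax_preserves_freq_space:
  assumes w: "\<forall>j. w $ j > 0" and g: "g \<in> Gmax w"
    and v: "v \<in> freq_space w k"
  shows "g v \<in> freq_space w k"
proof -
  have lin: "linear g" using Sp_linear[OF Gmax_Sp[OF g]] .
  have sq: "(w$j)\<^sup>2 = (w$k)\<^sup>2 \<longleftrightarrow> w$j = w$k" for j
    using w by (metis less_eq_real_def power2_eq_iff_nonneg)
  have hamvf2: "hamvf w (hamvf w u) = ((\<chi> j. - ((w$j)\<^sup>2 * fst u $ j)), (\<chi> j. - ((w$j)\<^sup>2 * snd u $ j)))" for u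
    by (simp add: hamvf_eq vec_eq_iff)
  have "hamvf w (hamvf w v) = - ((w$k)\<^sup>2 *\<^sub>R v)"
    using v by (auto simp: hamvf2 mode_space_def prod_eq_iff vec_eq_iff sq)
  then have "hamvf w (hamvf w (g v)) = - ((w$k)\<^sup>2 *\<^sub>R g v)"
    by (simp add: Gmax_commutes_hamvf[OF g] linear_scale[OF lin] linear_neg[OF lin])
  then have "(w$j)\<^sup>2 * fst (g v) $ j = (w$k)\<^sup>2 * fst (g v) $ j \<and>
      (w$j)\<^sup>2 * snd (g v) $ j = (w$k)\<^sup>2 * snd (g v) $ j" for j
    by (auto simp: hamvf2 prod_eq_iff vec_eq_iff dest: spec[of _ j])
  then show ?thesis by (fastforce simp: mode_space_def sq)
qed

section \<open>One-parameter subgroups\<close>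

lemma funpow_scaleR_linear:
  fixes A :: "'a::real_vector \<Rightarrow> 'a"
  assumes "linear A"
  shows "((\<lambda>u. t *\<^sub>R A u) ^^ k) v = (t ^ k) *\<^sub>R (A ^^ k) v"
  by (induction k) (simp_all add: linear_scale[OF assms])

lemma norm_funpow_le:
  fixes A :: "'a::real_normed_vector \<Rightarrow> 'a"
  assumes "\<And>x. norm (A x) \<le> K * norm x" and "K \<ge> 0"
  shows "norm ((A ^^ k) z) \<le> K ^ k * norm z"
proof (induction k)
  case (Suc k)
  have "norm ((A ^^ Suc k) z) \<le> K * norm ((A ^^ k) z)" using assms(1) by simp
  also have "\<dots> \<le> K * (K ^ k * norm z)" using Suc.IH assms(2) by (rule mult_left_mono)
  finally show ?case by simp
qed simp

lemma summable_lin_exp_series: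
  fixes A :: "'a::euclidean_space \<Rightarrow> 'a"
  assumes A: "linear A"
  shows "summable (\<lambda>k. (1 / fact k) *\<^sub>R (((\<lambda>u. t *\<^sub>R A u) ^^ k) z))"
proof -
  obtain K where K: "K > 0" "\<And>x. norm (A x) \<le> K * norm x"
    using linear_bounded_pos[OF A] by blast
  show ?thesis
  proof (rule summable_comparison_test')
    show "summable (\<lambda>k. (inverse (fact k) * (\<bar>t\<bar> * K) ^ k) * norm z)"
      by (intro summable_mult2 summable_exp)
    fix k :: nat
    have "norm ((1 / fact k) *\<^sub>R (((\<lambda>u. t *\<^sub>R A u) ^^ k) z))
        = inverse (fact k) * \<bar>t\<bar> ^ k * norm ((A ^^ k) z)"
      by (simp add: funpow_scaleR_linear[OF A] power_abs divide_inverse abs_mult)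
    also have "\<dots> \<le> inverse (fact k) * \<bar>t\<bar> ^ k * (K ^ k * norm z)"
      using K by (intro mult_left_mono norm_funpow_le) auto
    finally show "norm ((1 / fact k) *\<^sub>R (((\<lambda>u. t *\<^sub>R A u) ^^ k) z))
        \<le> (inverse (fact k) * (\<bar>t\<bar> * K) ^ k) * norm z"
      by (simp add: power_mult_distrib mult.assoc)
  qed
qed

lemma lin_exp_zero: "lin_exp (\<lambda>u. 0) z = z"
proof -
  have "(1 / fact k) *\<^sub>R (((\<lambda>u. 0) ^^ k) z) = (if k = 0 then z else 0)" for k
    by (cases k) simp_all
  then show ?thesis
    unfolding lin_exp_def using sums_single[of 0 "\<lambda>_. z"] by (simp add: sums_iff)
qed

lemma lin_exp_has_vector_derivative_0:
  fixes A :: "'a::euclidean_space \<Rightarrow> 'a"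
  assumes A: "linear A"
  shows "((\<lambda>t. lin_exp (\<lambda>u. t *\<^sub>R A u) z) has_vector_derivative A z) (at 0)"
proof -
  have "((\<lambda>t. lin_exp (\<lambda>u. t *\<^sub>R A u) z \<bullet> b) has_derivative (\<lambda>h. (h *\<^sub>R A z) \<bullet> b)) (at 0)" for b
  proof -
    define c where "c k = ((A ^^ k) z \<bullet> b) / fact k" for k
    have series_term: "((1 / fact k) *\<^sub>R (((\<lambda>u. t *\<^sub>R A u) ^^ k) z)) \<bullet> b = c k * t ^ k" for k t
      by (simp add: c_def funpow_scaleR_linear[OF A])
    have "(\<lambda>k. ((1 / fact k) *\<^sub>R (((\<lambda>u. t *\<^sub>R A u) ^^ k) z)) \<bullet> b) sums
        (lin_exp (\<lambda>u. t *\<^sub>R A u) z \<bullet> b)" for t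
      unfolding lin_exp_def
      by (intro bounded_linear.sums[OF bounded_linear_inner_left] summable_sums summable_lin_exp_series A)
    then have series: "(\<lambda>k. c k * t ^ k) sums (lin_exp (\<lambda>u. t *\<^sub>R A u) z \<bullet> b)" for t
      by (simp only: series_term)
    have "((\<lambda>t. \<Sum>k. c k * t ^ k) has_real_derivative (\<Sum>k. diffs c k * 0 ^ k)) (at 0)"
      using series by (intro termdiffs_strong_converges_everywhere) (auto simp: sums_iff)
    moreover have "(\<Sum>k. diffs c k * 0 ^ k) = A z \<bullet> b"
      unfolding powser_zero by (simp add: diffs_def c_def)
    ultimately show ?thesis
      using series by (simp add: sums_iff has_field_derivative_def mult_commute_abs)
  qed
  then show ?thesis
    unfolding has_vector_derivative_def using has_derivative_componentwise_within by blast
qed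

lemma lie_alg_linear: "A \<in> lie_alg G \<Longrightarrow> linear A"
  unfolding lie_alg_def by blast
lemma lie_alg_exp_mem: "A \<in> lie_alg G \<Longrightarrow> lin_exp (\<lambda>u. t *\<^sub>R A u) \<in> G"
  unfolding lie_alg_def by blast

lemma lie_alg_preserves_mode_space:
  assumes A: "A \<in> lie_alg G" and G: "\<And>g v. g \<in> G \<Longrightarrow> v \<in> mode_space P \<Longrightarrow> g v \<in> mode_space P"
    and z: "z \<in> mode_space P"
  shows "A z \<in> mode_space P"
  unfolding mode_space_def
proof (intro CollectI allI impI)
  fix j assume j: "\<not> P j"
  have lin: "linear A" using lie_alg_linear[OF A] .
  define f where "f t = lin_exp (\<lambda>u. t *\<^sub>R A u) z" for t
  have f: "(f has_vector_derivative A z) (at 0)"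
    unfolding f_def by (rule lin_exp_has_vector_derivative_0[OF lin])
  have "f t \<in> mode_space P" for t
    unfolding f_def using G[OF lie_alg_exp_mem[OF A] z] .
  then have const: "fst (f t) $ j = 0" "snd (f t) $ j = 0" for t
    using j by (auto simp: mode_space_def)
  have "((\<lambda>t. fst (f t) $ j) has_vector_derivative fst (A z) $ j) (at 0)"
    "((\<lambda>t. snd (f t) $ j) has_vector_derivative snd (A z) $ j) (at 0)"
    by (rule bounded_linear.has_vector_derivative[OF _ f],
        intro bounded_linear_compose[OF bounded_linear_vec_nth] bounded_linear_fst bounded_linear_snd)+
  then show "fst (A z) $ j = 0 \<and> snd (A z) $ j = 0"
    unfolding const by (metis vector_derivative_unique_at[OF _ has_vector_derivative_const])
qed

lemma Hform_lie_alg_Gmax: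
  assumes A: "A \<in> lie_alg (Gmax w)"
  shows "Hform w z (A z) = 0"
proof -
  have lin: "linear A" using lie_alg_linear[OF A] .
  define f where "f t = lin_exp (\<lambda>u. t *\<^sub>R A u) z" for t
  have f: "(f has_vector_derivative A z) (at 0)"
    unfolding f_def by (rule lin_exp_has_vector_derivative_0[OF lin])
  have f0: "f 0 = z" by (simp add: f_def lin_exp_zero)
  have "Hform w (f t) (f t) = Hform w z z" for t
    unfolding f_def using Gmax_preserves_Hform[OF lie_alg_exp_mem[OF A]] .
  moreover have "((\<lambda>t. Hform w (f t) (f t)) has_vector_derivative
      Hform w (f 0) (A z) + Hform w (A z) (f 0)) (at 0)"
    by (rule bounded_bilinear.has_vector_derivative[OF bounded_bilinear_Hform f f])
  ultimately have "((\<lambda>t. Hform w z z) has_vector_derivative 2 * Hform w z (A z)) (at 0)"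
    by (simp add: f0 Hform_sym[of w "A z"])
  then have "2 * Hform w z (A z) = 0"
    by (rule vector_derivative_unique_at[OF _ has_vector_derivative_const])
  then show ?thesis by simp
qed

lemma bilinear_preserved_by_rotation:
  fixes beta :: "'a::real_vector \<Rightarrow> 'a \<Rightarrow> real" and B :: "'a \<Rightarrow> 'a"
  assumes beta: "bilinear beta" and skew: "\<And>a y. beta (B a) y = - beta a (B y)"
    and B3: "\<And>a. B (B (B a)) = - B a" and sc: "s\<^sup>2 + c\<^sup>2 = 1"
  shows "beta (u + s *\<^sub>R B u + (1 - c) *\<^sub>R B (B u)) (v + s *\<^sub>R B v + (1 - c) *\<^sub>R B (B v)) = beta u v"
proof -
  note bil = bilinear_ladd[OF beta] bilinear_radd[OF beta] bilinear_lmul[OF beta]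
    bilinear_rmul[OF beta] bilinear_rneg[OF beta]
  have r1: "beta (B u) v = - beta u (B v)" by (rule skew)
  have r2: "beta (B (B u)) v = beta u (B (B v))" using skew[of "B u" v] skew[of u "B v"] by simp
  have r3: "beta (B u) (B v) = - beta u (B (B v))" by (rule skew)
  have r4: "beta (B (B u)) (B v) = - beta u (B v)"
    using skew[of "B u" "B v"] skew[of u "B (B v)"] B3[of v] bil by simp
  have r5: "beta (B u) (B (B v)) = beta u (B v)"
    using skew[of u "B (B v)"] B3[of v] bil by simp
  have r6: "beta (B (B u)) (B (B v)) = - beta u (B (B v))"
    using skew[of "B u" "B (B v)"] skew[of u "B v"] B3[of v] bil by simp
  define r where "r = 1 - c"
  have "beta (u + s *\<^sub>R B u + r *\<^sub>R B (B u)) (v + s *\<^sub>R B v + r *\<^sub>R B (B v))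
     = beta u v + s * beta u (B v) + r * beta u (B (B v)) + s * beta (B u) v + s * (s * beta (B u) (B v))
       + s * (r * beta (B u) (B (B v))) + r * beta (B (B u)) v + r * (s * beta (B (B u)) (B v))
       + r * (r * beta (B (B u)) (B (B v)))"
    by (simp add: bil algebra_simps)
  also have "\<dots> = beta u v + beta u (B (B v)) * (2 * r - s\<^sup>2 - r\<^sup>2)"
    unfolding r1 r2 r3 r4 r5 r6 by (simp add: algebra_simps power2_eq_square)
  also have "2 * r - s\<^sup>2 - r\<^sup>2 = 0" using sc by (simp add: r_def algebra_simps power2_eq_square)
  finally show ?thesis by (simp add: r_def)
qed

lemma funpow_cube_neg:
  fixes B :: "'a::real_vector \<Rightarrow> 'a"
  assumes B: "linear B" and B3: "\<And>a. B (B (B a)) = - B a" and "k \<ge> 1"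
  shows "(B ^^ k) y = (if odd k then ((-1) ^ ((k - 1) div 2)) *\<^sub>R B y
                       else (- ((-1) ^ (k div 2))) *\<^sub>R B (B y))"
  using \<open>k \<ge> 1\<close>
proof (induction k rule: dec_induct)
  case (step k)
  show ?case
  proof (cases "odd k")
    case True
    then obtain m where m: "k = 2 * m + 1" by (metis oddE)
    then have "Suc k = 2 * (m + 1)" by simp
    then show ?thesis using step.IH m by (simp add: linear_scale[OF B])
  next
    case False
    then obtain m where m: "k = 2 * m" by (metis evenE)
    then show ?thesis using step.IH False by (simp add: linear_scale[OF B] linear_neg[OF B] B3)
  qed
qed simp

lemma lin_exp_cube_neg:
  fixes B :: "'a::real_normed_vector \<Rightarrow> 'a"
  assumes B: "linear B" and B3: "\<And>a. B (B (B a)) = - B a"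
  shows "lin_exp (\<lambda>u. t *\<^sub>R B u) y = y + sin t *\<^sub>R B y + (1 - cos t) *\<^sub>R B (B y)"
proof -
  have series_term: "(1 / fact k) *\<^sub>R (((\<lambda>u. t *\<^sub>R B u) ^^ k) y) =
     (if k = 0 then y else 0) + (sin_coeff k * t ^ k) *\<^sub>R B y
     + ((if k = 0 then 1 else 0) - cos_coeff k * t ^ k) *\<^sub>R B (B y)" for k
  proof (cases "k = 0")
    case False
    then have "k \<ge> 1" by simp
    have "((\<lambda>u. t *\<^sub>R B u) ^^ k) y = (t ^ k) *\<^sub>R (B ^^ k) y"
      by (simp only: funpow_scaleR_linear[OF B])
    then show ?thesis
      using False funpow_cube_neg[where B=B, OF B B3 \<open>k \<ge> 1\<close>, of y]
      by (cases "odd k") (simp_all add: sin_coeff_def cos_coeff_def divide_inverse algebra_simps)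
  qed (simp add: sin_coeff_def cos_coeff_def)
  have "(\<lambda>k::nat. if k = 0 then y else 0) sums y"
    using sums_single[of 0 "\<lambda>_. y"] by simp
  moreover have "(\<lambda>k. (sin_coeff k * t ^ k) *\<^sub>R B y) sums (sin t *\<^sub>R B y)"
    using sums_scaleR_left[OF sin_converges[of t]] by simp
  moreover have "(\<lambda>k::nat. if k = 0 then 1 else 0) sums (1::real)"
    using sums_single[of 0 "\<lambda>_. 1::real"] by simp
  then have "(\<lambda>k. ((if k = 0 then 1 else 0) - cos_coeff k * t ^ k) *\<^sub>R B (B y)) sums
      ((1 - cos t) *\<^sub>R B (B y))"
    using sums_scaleR_left[OF sums_diff[OF _ cos_converges[of t]]] by simp
  ultimately have "(\<lambda>k. (1 / fact k) *\<^sub>R (((\<lambda>u. t *\<^sub>R B u) ^^ k) y)) sums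
      (y + sin t *\<^sub>R B y + (1 - cos t) *\<^sub>R B (B y))"
    unfolding series_term by (intro sums_add)
  then show ?thesis unfolding lin_exp_def by (simp add: sums_iff)
qed

lemma lie_alg_Gmax_intro:
  assumes B: "linear B" and B3: "\<And>a. B (B (B a)) = - B a"
    and Hform_skew: "\<And>a y. Hform w (B a) y = - Hform w a (B y)"
    and omega_skew: "\<And>a y. omega (B a) y = - omega a (B y)"
  shows "B \<in> lie_alg (Gmax w)"
  unfolding lie_alg_def
proof (intro CollectI conjI allI B)
  fix t
  define g where "g y = y + sin t *\<^sub>R B y + (1 - cos t) *\<^sub>R B (B y)" for y
  have "linear g"
    unfolding g_def by (rule linearI) (simp_all add: linear_add[OF B] linear_scale[OF B] algebra_simps)
  moreover have "omega (g a) (g b) = omega a b" for a b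
    unfolding g_def
    by (rule bilinear_preserved_by_rotation[where beta=omega and B=B, OF bilinear_omega omega_skew B3])
      simp
  moreover have "Hform w (g a) (g a) = Hform w a a" for a
    unfolding g_def
    by (rule bilinear_preserved_by_rotation[where beta="Hform w" and B=B,
          OF bilinear_Hform Hform_skew B3]) simp
  ultimately have "g \<in> Gmax w"
    unfolding Gmax_def Sp_def by (simp add: Hw_eq_Hform)
  moreover have "lin_exp (\<lambda>u. t *\<^sub>R B u) = g"
    unfolding g_def by (rule ext, rule lin_exp_cube_neg[where B=B, OF B B3])
  ultimately show "lin_exp (\<lambda>u. t *\<^sub>R B u) \<in> Gmax w" by simp
qed

section \<open>Unitary rotations of a frequency space\<close>

(* J_w: each frequency space becomes a Hermitian space for J_w and Hform. *)
definition cstruct :: "real^'n::finite \<Rightarrow> 'n phase \<Rightarrow> 'n phase" where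
  "cstruct w u = ((\<chi> j. snd u $ j / w$j), (\<chi> j. - (w$j * fst u $ j)))"

lemma linear_cstruct: "linear (cstruct w)"
  by (rule linearI) (simp_all add: cstruct_def prod_eq_iff vec_eq_iff algebra_simps add_divide_distrib)

lemma cstruct_mode_space: "a \<in> mode_space P \<Longrightarrow> cstruct w a \<in> mode_space P"
  by (simp add: mode_space_def cstruct_def)

context
  fixes w :: "real^'n::finite"
  assumes w: "\<forall>j. w $ j > 0"
begin

lemma cstruct_cstruct: "cstruct w (cstruct w a) = - a"
  using w by (simp add: cstruct_def prod_eq_iff vec_eq_iff less_imp_neq[symmetric])

lemma Hform_cstruct_cstruct: "Hform w (cstruct w a) (cstruct w b) = Hform w a b"
  unfolding Hform_def cstruct_def using w
  by (intro sum.cong refl) (simp add: field_simps power2_eq_square less_imp_neq[symmetric])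

lemma Hform_cstruct_skew: "Hform w a (cstruct w b) = - Hform w (cstruct w a) b"
proof -
  have "Hform w a (cstruct w b) = (\<Sum>j\<in>UNIV. w$j * (fst a $ j * snd b $ j) - w$j * (snd a $ j * fst b $ j))"
    "Hform w (cstruct w a) b = (\<Sum>j\<in>UNIV. w$j * (snd a $ j * fst b $ j) - w$j * (fst a $ j * snd b $ j))"
    unfolding Hform_def cstruct_def using w
    by (intro sum.cong refl; simp add: field_simps power2_eq_square less_imp_neq[symmetric])+
  then show ?thesis by (simp add: sum_negf[symmetric] algebra_simps)
qed

lemma Hform_cstruct_self: "Hform w (cstruct w a) a = 0"
  using Hform_cstruct_skew[of a a] Hform_sym[of w a "cstruct w a"] by simp

lemma hamvf_eq_cstruct:
  assumes "z \<in> freq_space w k"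
  shows "hamvf w z = w$k *\<^sub>R cstruct w z"
proof -
  have "fst (hamvf w z) $ j = fst (w$k *\<^sub>R cstruct w z) $ j \<and>
      snd (hamvf w z) $ j = snd (w$k *\<^sub>R cstruct w z) $ j" for j
    using assms w[rule_format, of j]
    by (cases "w $ j = w $ k") (auto simp: hamvf_eq cstruct_def mode_space_def power2_eq_square)
  then show ?thesis by (simp add: prod_eq_iff vec_eq_iff)
qed

lemma omega_eq_Hform_cstruct:
  assumes a: "a \<in> freq_space w k"
  shows "omega a y = - Hform w (cstruct w a) y / w$k"
proof -
  have "Hform w (cstruct w a) y = Hform w y (cstruct w a)" by (rule Hform_sym)
  also have "\<dots> = - omega y (hamvf w (cstruct w a))" by (rule Hform_eq_omega_hamvf)
  also have "\<dots> = - w$k * omega a y"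
    by (simp add: hamvf_eq_cstruct[OF cstruct_mode_space[OF a]] cstruct_cstruct omega_scaleR_right
        omega_antisym[of y] bilinear_rneg[OF bilinear_omega])
  finally show ?thesis using w[rule_format, of k] by simp
qed

end

(* For z, v in a frequency space that are Hform-orthonormal with v orthogonal to J_w z as well,
   this generates the unitary rotation of span {z, J_w z, v, J_w v} taking z to v. *)
definition rot_gen :: "real^'n::finite \<Rightarrow> 'n phase \<Rightarrow> 'n phase \<Rightarrow> 'n phase \<Rightarrow> 'n phase" where
  "rot_gen w z v u = Hform w z u *\<^sub>R v + Hform w (cstruct w z) u *\<^sub>R cstruct w v
     - Hform w v u *\<^sub>R z - Hform w (cstruct w v) u *\<^sub>R cstruct w z"

lemma linear_rot_gen: "linear (rot_gen w z v)"
  by (rule linearI) (simp_all add: rot_gen_def Hform_bilinear_simps algebra_simps)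

context
  fixes w :: "real^'n::finite" and k :: 'n and z v :: "'n phase"
  assumes w: "\<forall>j. w $ j > 0"
    and z: "z \<in> freq_space w k" and v: "v \<in> freq_space w k"
    and zz: "Hform w z z = 1" and vv: "Hform w v v = 1" and zv: "Hform w z v = 0"
    and Izv: "Hform w (cstruct w z) v = 0"
begin

private lemma frame:
  "Hform w v z = 0" "Hform w (cstruct w z) z = 0" "Hform w (cstruct w v) v = 0"
  "Hform w (cstruct w v) z = 0" "Hform w (cstruct w z) (cstruct w z) = 1"
  "Hform w (cstruct w v) (cstruct w v) = 1" "Hform w (cstruct w v) (cstruct w z) = 0"
  "Hform w z (cstruct w z) = 0" "Hform w v (cstruct w z) = 0" "Hform w z (cstruct w v) = 0"
  "Hform w v (cstruct w v) = 0" "Hform w (cstruct w z) (cstruct w v) = 0"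
  using zv Izv zz vv Hform_sym[of w] Hform_cstruct_self[OF w] Hform_cstruct_cstruct[OF w]
    Hform_cstruct_skew[OF w]
  by metis+

lemma rot_gen_apply: "rot_gen w z v z = v"
  using frame zz by (simp add: rot_gen_def)

private lemma rot_gen_frame:
  "rot_gen w z v (cstruct w z) = cstruct w v" "rot_gen w z v v = - z"
  "rot_gen w z v (cstruct w v) = - cstruct w z"
  using frame zz zv vv Izv by (simp_all add: rot_gen_def)

private lemma rot_gen_cube: "rot_gen w z v (rot_gen w z v (rot_gen w z v u)) = - rot_gen w z v u"
proof -
  note lin = linear_rot_gen[of w z v]
  have "rot_gen w z v (rot_gen w z v u) = - (Hform w z u *\<^sub>R z) - Hform w (cstruct w z) u *\<^sub>R cstruct w z
     - Hform w v u *\<^sub>R v - Hform w (cstruct w v) u *\<^sub>R cstruct w v"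
    by (subst (2) rot_gen_def)
      (simp add: linear_add[OF lin] linear_diff[OF lin] linear_scale[OF lin] rot_gen_apply
        rot_gen_frame algebra_simps)
  then show ?thesis
    by (simp add: linear_add[OF lin] linear_diff[OF lin] linear_scale[OF lin] linear_neg[OF lin]
        rot_gen_apply rot_gen_frame rot_gen_def Hform_bilinear_simps frame zz vv zv Izv algebra_simps)
qed

private lemma Hform_rot_gen_skew: "Hform w (rot_gen w z v a) y = - Hform w a (rot_gen w z v y)"
  by (simp add: rot_gen_def Hform_bilinear_simps algebra_simps Hform_sym[of w _ a] Hform_sym[of w y])

private lemma omega_rot_gen_skew: "omega (rot_gen w z v a) y = - omega a (rot_gen w z v y)"
proof -
  have form: "omega (rot_gen w z v a) y = (- Hform w z a * Hform w (cstruct w v) y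
      + Hform w (cstruct w z) a * Hform w v y + Hform w v a * Hform w (cstruct w z) y
      - Hform w (cstruct w v) a * Hform w z y) / w$k" for a y
    unfolding rot_gen_def omega_diff_left omega_add_left omega_scaleR_left
      omega_eq_Hform_cstruct[OF w z] omega_eq_Hform_cstruct[OF w v]
      omega_eq_Hform_cstruct[OF w cstruct_mode_space[OF z]]
      omega_eq_Hform_cstruct[OF w cstruct_mode_space[OF v]]
    using w by (simp add: cstruct_cstruct[OF w] Hform_minus_left field_simps less_imp_neq[symmetric])
  have "omega (rot_gen w z v a) y = omega (rot_gen w z v y) a"
    unfolding form by (simp add: algebra_simps)
  then show ?thesis using omega_antisym[of a "rot_gen w z v y"] by simp
qed

lemma rot_gen_lie_alg: "rot_gen w z v \<in> lie_alg (Gmax w)"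
  by (rule lie_alg_Gmax_intro[OF linear_rot_gen rot_gen_cube Hform_rot_gen_skew omega_rot_gen_skew])

end

section \<open>The directions generated by the symmetries\<close>

definition sym_directions :: "real^'n::finite \<Rightarrow> 'n phase \<Rightarrow> 'n phase set" where
  "sym_directions w z = {a *\<^sub>R hamvf w z + A z | a A. A \<in> lie_alg (Gmax w)}"

definition energy_tangent :: "real^'n::finite \<Rightarrow> 'n \<Rightarrow> 'n phase \<Rightarrow> 'n phase set" where
  "energy_tangent w k z = {y \<in> freq_space w k. Hform w z y = 0}"

lemma subspace_energy_tangent: "subspace (energy_tangent w k z)"
  using subspace_mode_space[of "\<lambda>j. w$j = w$k"]
  unfolding subspace_def energy_tangent_def by (auto simp: Hform_bilinear_simps)

lemma zero_lie_alg_Gmax: "(\<lambda>u. 0) \<in> lie_alg (Gmax w)"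
  by (rule lie_alg_Gmax_intro) (simp_all add: linear_zero omega_eq)

lemma sym_directions_subset_energy_tangent:
  assumes w: "\<forall>j. w $ j > 0" and z: "z \<in> freq_space w k"
  shows "sym_directions w z \<subseteq> energy_tangent w k z"
proof
  fix y assume "y \<in> sym_directions w z"
  then obtain a A where y: "y = a *\<^sub>R hamvf w z + A z" and A: "A \<in> lie_alg (Gmax w)"
    unfolding sym_directions_def by blast
  have hamvf: "hamvf w z = w$k *\<^sub>R cstruct w z" by (rule hamvf_eq_cstruct[OF w z])
  have "hamvf w z \<in> freq_space w k"
    unfolding hamvf using subspace_mode_space cstruct_mode_space[OF z] by (rule subspace_scale)
  moreover have "A z \<in> freq_space w k"
    by (rule lie_alg_preserves_mode_space[OF A _ z]) (rule Gmax_preserves_freq_space[OF w])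
  ultimately have "y \<in> freq_space w k"
    unfolding y using subspace_mode_space by (metis subspace_add subspace_scale)
  moreover have "Hform w z (hamvf w z) = 0" by (rule Hform_hamvf_self)
  then have "Hform w z y = 0" unfolding y using Hform_lie_alg_Gmax[OF A] by (simp add: Hform_bilinear_simps)
  ultimately show "y \<in> energy_tangent w k z" by (simp add: energy_tangent_def)
qed

lemma hamvf_in_sym_directions: "hamvf w z \<in> sym_directions w z"
proof -
  have "\<exists>a A. hamvf w z = a *\<^sub>R hamvf w z + A z \<and> A \<in> lie_alg (Gmax w)"
    using zero_lie_alg_Gmax[of w] by (intro exI[of _ 1] exI[of _ "\<lambda>u. 0"]) simp
  then show ?thesis by (simp add: sym_directions_def)
qed

lemma complex_orthogonal_in_span_sym_directions:
  assumes w: "\<forall>j. w $ j > 0" and z: "z \<in> freq_space w k" and z0: "z \<noteq> 0"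
    and y: "y \<in> freq_space w k" and zy: "Hform w z y = 0" and Izy: "Hform w (cstruct w z) y = 0"
  shows "y \<in> span (sym_directions w z)"
proof (cases "y = 0")
  case False
  define n m where "n = Hform w z z" and "m = Hform w y y"
  have n: "n > 0" and m: "m > 0" unfolding n_def m_def using Hform_pos[OF w] z0 False by auto
  define z1 v1 where "z1 = (1 / sqrt n) *\<^sub>R z" and "v1 = (1 / sqrt m) *\<^sub>R y"
  have z1: "z1 \<in> freq_space w k" and v1: "v1 \<in> freq_space w k"
    unfolding z1_def v1_def using subspace_mode_space z y by (metis subspace_scale)+
  have "Hform w z1 z1 = 1" "Hform w v1 v1 = 1" "Hform w z1 v1 = 0" "Hform w (cstruct w z1) v1 = 0"
    unfolding z1_def v1_def using n m zy Izy
    by (simp_all add: Hform_bilinear_simps linear_scale[OF linear_cstruct] n_def[symmetric]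
        m_def[symmetric])
  note rot = rot_gen_lie_alg[OF w z1 v1 this] rot_gen_apply[OF w z1 v1 this]
  have "rot_gen w z1 v1 z = (sqrt n / sqrt m) *\<^sub>R y"
    using linear_scale[OF linear_rot_gen, of w z1 v1 "sqrt n" z1] rot(2) n
    by (simp add: z1_def v1_def)
  moreover have "\<exists>a A. rot_gen w z1 v1 z = a *\<^sub>R hamvf w z + A z \<and> A \<in> lie_alg (Gmax w)"
    using rot(1) by (intro exI[of _ 0] exI[of _ "rot_gen w z1 v1"]) simp
  then have "rot_gen w z1 v1 z \<in> sym_directions w z" by (simp add: sym_directions_def)
  ultimately have "(sqrt n / sqrt m) *\<^sub>R y \<in> span (sym_directions w z)" by (simp add: span_base)
  then show ?thesis using span_scale[of _ _ "sqrt m / sqrt n"] n m by fastforce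
qed (simp add: span_zero)

lemma energy_tangent_subset_span_sym_directions:
  assumes w: "\<forall>j. w $ j > 0" and z: "z \<in> freq_space w k" and z0: "z \<noteq> 0"
  shows "energy_tangent w k z \<subseteq> span (sym_directions w z)"
proof
  fix y assume "y \<in> energy_tangent w k z"
  then have y: "y \<in> freq_space w k" and zy: "Hform w z y = 0" by (auto simp: energy_tangent_def)
  have Iz: "cstruct w z \<in> span (sym_directions w z)"
    using hamvf_eq_cstruct[OF w z] w span_scale[OF span_base[OF hamvf_in_sym_directions[of w z]], of "1 / w$k"]
    by (simp add: less_imp_neq[symmetric])
  define c where "c = Hform w (cstruct w z) y / Hform w z z"
  have "y - c *\<^sub>R cstruct w z \<in> freq_space w k"
    using subspace_mode_space y cstruct_mode_space[OF z] by (metis subspace_diff subspace_scale)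
  moreover have "Hform w z (y - c *\<^sub>R cstruct w z) = 0"
    using zy Hform_cstruct_self[OF w, of z] Hform_sym[of w z] by (simp add: Hform_bilinear_simps)
  moreover have "Hform w (cstruct w z) (y - c *\<^sub>R cstruct w z) = 0"
    using Hform_pos[OF w z0]
    by (simp add: c_def Hform_bilinear_simps Hform_cstruct_cstruct[OF w])
  ultimately have "y - c *\<^sub>R cstruct w z \<in> span (sym_directions w z)"
    by (rule complex_orthogonal_in_span_sym_directions[OF w z z0])
  then have "y - c *\<^sub>R cstruct w z + c *\<^sub>R cstruct w z \<in> span (sym_directions w z)"
    using Iz by (intro span_add span_scale)
  then show "y \<in> span (sym_directions w z)" by simp
qed

lemma dim_freq_space_eq:
  assumes w: "\<forall>j. w $ j > 0" and z: "z \<in> freq_space w k" and z0: "z \<noteq> 0"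
  shows "dim (freq_space w k) = dim (energy_tangent w k z) + 1"
proof -
  have n: "Hform w z z > 0" by (rule Hform_pos[OF w z0])
  then have "z \<notin> energy_tangent w k z" by (simp add: energy_tangent_def)
  then have "z \<notin> span (energy_tangent w k z)"
    using span_eq_iff[THEN iffD2, OF subspace_energy_tangent] by blast
  moreover have "span (insert z (energy_tangent w k z)) = freq_space w k"
  proof
    show "span (insert z (energy_tangent w k z)) \<subseteq> freq_space w k"
      using z by (intro span_minimal subspace_mode_space) (auto simp: energy_tangent_def)
    show "freq_space w k \<subseteq> span (insert z (energy_tangent w k z))"
    proof
      fix y assume y: "y \<in> freq_space w k"
      define c where "c = Hform w z y / Hform w z z"
      have "y - c *\<^sub>R z \<in> energy_tangent w k z"
        unfolding energy_tangent_def c_def using n y z subspace_mode_space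
        by (auto simp: Hform_bilinear_simps intro: subspace_diff subspace_scale)
      then have "y - c *\<^sub>R z + c *\<^sub>R z \<in> span (insert z (energy_tangent w k z))"
        by (intro span_add span_scale) (auto intro: span_base)
      then show "y \<in> span (insert z (energy_tangent w k z))" by simp
    qed
  qed
  ultimately show ?thesis by (metis dim_span dim_insert)
qed

lemma dim_sym_directions:
  assumes w: "\<forall>j. w $ j > 0" and z: "z \<in> freq_space w k" and z0: "z \<noteq> 0"
  shows "dim (sym_directions w z) + 1 = dim (freq_space w k)"
proof -
  have "dim (sym_directions w z) \<le> dim (energy_tangent w k z)"
    by (rule dim_subset[OF sym_directions_subset_energy_tangent[OF w z]])
  moreover have "dim (energy_tangent w k z) \<le> dim (sym_directions w z)"
    using dim_subset[OF energy_tangent_subset_span_sym_directions[OF w z z0]] by simp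
  ultimately show ?thesis using dim_freq_space_eq[OF w z z0] by simp
qed

section \<open>Resonances\<close>

lemma periodic_orbit_iff:
  assumes "\<forall>j. w $ j > 0"
  shows "periodic_orbit w T z \<longleftrightarrow> T \<noteq> 0 \<and> z \<noteq> 0 \<and> z \<in> mode_space (\<lambda>j. cos (w$j * T) = 1)"
  unfolding periodic_orbit_def flow_eq_osc_flow[OF assms] osc_flow_fixed_iff[OF assms] ..

lemma NDR_iff_dim_eq:
  assumes w: "\<forall>j. w $ j > 0" and z: "z \<in> freq_space w k" and z0: "z \<noteq> 0"
  shows "NDR w T z \<longleftrightarrow> dim (mode_space (\<lambda>j. cos (w$j * T) = 1)) = dim (freq_space w k)"
  unfolding NDR_def sym_directions_def[symmetric] E1_eq_mode_space[OF w]
  using dim_sym_directions[OF w z z0] by simp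

lemma dim_mode_space_less:
  assumes "\<And>j. P j \<Longrightarrow> Q j" and "Q i" and "\<not> P i"
  shows "dim (mode_space P) < dim (mode_space Q)"
proof -
  define e :: "'a phase" where "e = (axis i 1, 0)"
  have "fst e $ i = 1" by (simp add: e_def)
  then have "e \<notin> mode_space P" using assms(3) by (auto simp: mode_space_def)
  then have "e \<notin> span (mode_space P)" by (simp add: span_eq_iff[THEN iffD2, OF subspace_mode_space])
  then have "dim (mode_space P) < dim (insert e (mode_space P))" by (simp add: dim_insert)
  also have "\<dots> \<le> dim (mode_space Q)"
    using mode_space_mono[of P Q] assms by (intro dim_subset) (auto simp: e_def mode_space_def axis_def)
  finally show ?thesis .
qed

lemma cos_eq_1_imp_ratio_rat:
  fixes x y :: real
  assumes "cos x = 1" and "cos y = 1" and "y \<noteq> 0"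
  shows "x / y \<in> \<rat>"
proof -
  obtain m n :: int where "x = of_int m * 2 * pi" and "y = of_int n * 2 * pi"
    using assms(1,2) cos_one_2pi_int by metis
  then have "x / y = of_int m / of_int n" using assms(3) by simp
  then show ?thesis by simp
qed

lemma nonresonant_periodic_orbit_NDR:
  assumes w: "\<forall>j. w $ j > 0" and nonres: "\<forall>i j. w $ i / w $ j \<in> \<rat> \<longrightarrow> w $ i = w $ j"
    and po: "periodic_orbit w T z"
  shows "NDR w T z"
proof -
  have T: "T \<noteq> 0" and z0: "z \<noteq> 0" and z: "z \<in> mode_space (\<lambda>j. cos (w$j * T) = 1)"
    using po by (auto simp: periodic_orbit_iff[OF w])
  obtain k where "fst z $ k \<noteq> 0 \<or> snd z $ k \<noteq> 0"
    using z0 by (metis prod_eq_iff vec_eq_iff zero_index fst_zero snd_zero)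
  then have k: "cos (w$k * T) = 1" using z by (auto simp: mode_space_def)
  have "cos (w$j * T) = 1 \<longleftrightarrow> w$j = w$k" for j
  proof
    assume "cos (w$j * T) = 1"
    then have "(w$j * T) / (w$k * T) \<in> \<rat>"
      using k T w by (intro cos_eq_1_imp_ratio_rat) (auto simp: less_imp_neq[symmetric])
    then show "w$j = w$k" using nonres T by simp
  qed (simp add: k)
  then have "mode_space (\<lambda>j. cos (w$j * T) = 1) = freq_space w k" by simp
  then show ?thesis using NDR_iff_dim_eq[OF w _ z0] z by simp
qed

lemma resonant_not_NDR:
  assumes w: "\<forall>j. w $ j > 0" and rat: "w $ i / w $ j \<in> \<rat>" and ne: "w $ i \<noteq> w $ j"
  shows "\<exists>T z. periodic_orbit w T z \<and> \<not> NDR w T z"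
proof -
  obtain a b :: int where b: "b > 0" and ab: "w $ i / w $ j = of_int a / of_int b"
    using rat by (metis Rats_cases')
  define T where "T = of_int b * 2 * pi / w $ j"
  have T: "T \<noteq> 0" using b w by (simp add: T_def less_imp_neq[symmetric])
  have "w$j * T = of_int b * 2 * pi" using w by (simp add: T_def less_imp_neq[symmetric])
  then have cj: "cos (w$j * T) = 1" using cos_one_2pi_int by blast
  have "w$i * T = of_int a * 2 * pi"
    using ab w b by (simp add: T_def field_simps less_imp_neq[symmetric])
  then have ci: "cos (w$i * T) = 1" using cos_one_2pi_int by blast
  define z :: "'a phase" where "z = (axis i 1, 0)"
  have z0: "z \<noteq> 0" and z: "z \<in> freq_space w i"
    by (auto simp: z_def axis_def mode_space_def vec_eq_iff prod_eq_iff)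
  have "freq_space w i \<subseteq> mode_space (\<lambda>l. cos (w$l * T) = 1)"
    by (rule mode_space_mono) (use ci in simp)
  then have "z \<in> mode_space (\<lambda>l. cos (w$l * T) = 1)" using z by blast
  then have po: "periodic_orbit w T z" using T z0 by (simp add: periodic_orbit_iff[OF w])
  have "dim (freq_space w i) < dim (mode_space (\<lambda>l. cos (w$l * T) = 1))"
    by (rule dim_mode_space_less[of _ _ j]) (use cj ci ne in auto)
  then have "\<not> NDR w T z" using NDR_iff_dim_eq[OF w z z0] by simp
  with po show ?thesis by blast
qed

theorem mainTheorem9:
  fixes w :: "real^'n::finite"
  assumes "\<forall>j. w $ j > 0"
  shows "(\<forall>i j. w $ i / w $ j \<in> \<rat> \<longrightarrow> w $ i = w $ j) \<longleftrightarrow>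
         (\<forall>T z. periodic_orbit w T z \<longrightarrow> NDR w T z)"
  using nonresonant_periodic_orbit_NDR[OF assms] resonant_not_NDR[OF assms] by blast

end
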